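(* Let $n$ be a positive integer, $\varphi$ a nonconstant analytic self-map of $\mathbb D$ with $\|\varphi\|_\infty<1$, and $\psi\in H^\infty$. Then for every real $b$ with $\|\varphi\|_\infty\le b<1$, $$\|D_{\psi,\varphi,n}\|_{-1}\le n!\,\|\psi\|_\infty\sqrt{\frac{b+|\varphi(0)|}{b-|\varphi(0)|}}\binom{N}{n}b^{N-n},\qquad N=\Big\lfloor\frac{n}{1-b}\Big\rfloor.$$ In particular, if $\|\varphi\|_\infty\le\frac{1}{n+1}$ and $\varphi(0)=0$, then $\|D_{\varphi,n}\|_{-1}=n!$.
   Context: $H^2$ is the Hardy space of analytic $f$ on the open unit disk $\mathbb D$ with $\|f\|^2=\sup_{0<r<1}\frac1{2\pi}\int_0^{2\pi}|f(re^{i\theta})|^2d\theta<\infty$; $\|T\|_{-1}$ denotes the operator norm on $H^2$. $H^\infty$ is the space of bounded analytic functions on $\mathbb D$ with $\|f\|_\infty=\sup_{z\in\mathbb D}|f(z)|$. $D_{\psi,\varphi,n}f=\psi\cdot(f^{(n)}\circ\varphi)$ and $D_{\varphi,n}f=f^{(n)}\circ\varphi$. $\lfloor\cdot\rfloor$ is the greatest integer function. *)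

theory Defs
  imports "HOL-Analysis.Analysis"
begin

definition h2_mean :: "(complex \<Rightarrow> complex) \<Rightarrow> real \<Rightarrow> real" where
  "h2_mean f r = (1 / (2 * pi)) *
     integral {0..2*pi} (\<lambda>t. (cmod (f (complex_of_real r * exp (\<i> * complex_of_real t)))) ^ 2)"

definition in_H2 :: "(complex \<Rightarrow> complex) \<Rightarrow> bool" where
  "in_H2 f \<longleftrightarrow> f holomorphic_on ball 0 1 \<and> bdd_above (h2_mean f ` {0<..<1})"

definition h2_norm :: "(complex \<Rightarrow> complex) \<Rightarrow> real" where
  "h2_norm f = sqrt (SUP r\<in>{0<..<1}. h2_mean f r)"

definition h2_opnorm :: "((complex \<Rightarrow> complex) \<Rightarrow> (complex \<Rightarrow> complex)) \<Rightarrow> ereal" where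
  "h2_opnorm T = (SUP f\<in>{f. in_H2 f \<and> h2_norm f \<le> 1}.
       (if in_H2 (T f) then ereal (h2_norm (T f)) else \<infinity>))"

definition in_Hinf :: "(complex \<Rightarrow> complex) \<Rightarrow> bool" where
  "in_Hinf f \<longleftrightarrow> f holomorphic_on ball 0 1 \<and> bounded (f ` ball 0 1)"

definition hinf_norm :: "(complex \<Rightarrow> complex) \<Rightarrow> real" where
  "hinf_norm f = (SUP z\<in>ball 0 1. cmod (f z))"

definition wcd_op :: "(complex \<Rightarrow> complex) \<Rightarrow> (complex \<Rightarrow> complex) \<Rightarrow> nat
     \<Rightarrow> (complex \<Rightarrow> complex) \<Rightarrow> (complex \<Rightarrow> complex)" where
  "wcd_op \<psi> \<phi> n f = (\<lambda>z. \<psi> z * (deriv ^^ n) f (\<phi> z))"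

definition cd_op :: "(complex \<Rightarrow> complex) \<Rightarrow> nat
     \<Rightarrow> (complex \<Rightarrow> complex) \<Rightarrow> (complex \<Rightarrow> complex)" where
  "cd_op \<phi> n f = (\<lambda>z. (deriv ^^ n) f (\<phi> z))"

end

theory Submission
  imports Defs "HOL-Complex_Analysis.Complex_Analysis"
begin

text \<open>
  As \<open>\<phi>\<close> is nonconstant, the maximum modulus principle gives \<open>|\<phi>| < b\<close> on the disk.
  For \<open>g\<close> holomorphic on the closed disk of radius \<open>b\<close> this yields a subordination estimate
  in the spirit of Littlewood: every circle mean of \<open>|g \<circ> \<phi>|\<^sup>2\<close> is at most
  \<open>(b + |\<phi> 0|) / (b - |\<phi> 0|)\<close> times the mean of \<open>|g|\<^sup>2\<close> on the circle of radius \<open>b\<close>.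
  Indeed, \<open>|g w|\<^sup>2\<close> is bounded by its Poisson integral; integrating over \<open>w = \<phi>(r e\<^sup>i\<^sup>s)\<close>
  and swapping the integrals leaves the mean over \<open>s\<close> of the Poisson kernel at \<open>\<phi>(r e\<^sup>i\<^sup>s)\<close>,
  which is harmonic and hence equals its value at \<open>\<phi> 0\<close>; Harnack's inequality bounds that.

  For \<open>g\<close> the \<open>n\<close>-th derivative of \<open>f = \<Sum> a\<^sub>k z\<^sup>k\<close>, Parseval's identity turns the mean
  on the circle of radius \<open>b\<close> into \<open>\<Sum>\<^sub>k |a\<^sub>k\<^sub>+\<^sub>n|\<^sup>2 (n! (k+n choose n) b\<^sup>k)\<^sup>2\<close>. Since
  \<open>m \<mapsto> (m choose n) b\<^sup>m\<^sup>-\<^sup>n\<close> increases up to \<open>N = \<lfloor>n/(1-b)\<rfloor>\<close> and decreases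
  afterwards, this is at most \<open>(n! (N choose n) b\<^sup>N\<^sup>-\<^sup>n)\<^sup>2 \<parallel>f\<parallel>\<^sup>2\<close>.
  In the special case the bound is \<open>n!\<close>, attained at \<open>z\<^sup>n\<close>.
\<close>

lemma norm_of_real_mult_cis [simp]: "cmod (complex_of_real \<rho> * cis t) = \<bar>\<rho>\<bar>"
  by (simp add: norm_mult)

lemma h2_mean_cis:
  "h2_mean f r = (1/(2*pi)) * integral {0..2*pi} (\<lambda>t. cmod (f (complex_of_real r * cis t))^2)"
  by (simp add: h2_mean_def cis_conv_exp)

lemma continuous_on_circle_comp:
  fixes g :: "complex \<Rightarrow> 'a::topological_space"
  assumes "continuous_on (cball 0 \<rho>) g" "\<rho> \<ge> 0"
  shows "continuous_on S (\<lambda>t. g (of_real \<rho> * cis t))"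
  by (rule continuous_on_compose2[OF assms(1)]) (use assms(2) in \<open>auto intro!: continuous_intros\<close>)

lemma has_integral_circlepath_param:
  assumes "(G has_contour_integral I) (circlepath 0 r)"
  shows "((\<lambda>t. G (of_real r * cis t) * of_real r * \<i> * cis t) has_integral I) {0..2*pi}"
  using assms unfolding circlepath_def
  by (subst (asm) has_contour_integral_part_circlepath_iff) auto

lemma Cauchy_integral_circle_param:
  fixes F :: "complex \<Rightarrow> complex"
  assumes "F holomorphic_on cball 0 r" "cmod w < r"
  shows "((\<lambda>t. F (of_real r * cis t) * (of_real r * cis t) / (of_real r * cis t - w))
            has_integral (2*pi*F w)) {0..2*pi}"
proof -
  have "((\<lambda>u. F u/(u-w)) has_contour_integral (2 * of_real pi * \<i> * F w)) (circlepath 0 r)"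
    using assms by (intro Cauchy_integral_circlepath_simple) auto
  from has_integral_mult_left[OF has_integral_circlepath_param[OF this], of "-\<i>"]
  show ?thesis by (simp add: algebra_simps)
qed

lemma higher_deriv_integral_circle_param:
  fixes F :: "complex \<Rightarrow> complex"
  assumes "F holomorphic_on cball 0 r" "r > 0"
  shows "((\<lambda>t. F (of_real r * cis t) / (of_real r * cis t)^k)
            has_integral (2*pi*(deriv ^^ k) F 0 / fact k)) {0..2*pi}"
proof -
  have "((\<lambda>u. F u / (u-0) ^ (Suc k)) has_contour_integral ((2 * pi * \<i>) / (fact k) * (deriv ^^ k) F 0))
           (circlepath 0 r)"
    using assms by (intro Cauchy_has_contour_integral_higher_derivative_circlepath)
       (auto simp: holomorphic_on_imp_continuous_on holomorphic_on_subset)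
  from has_integral_mult_left[OF has_integral_circlepath_param[OF this], of "-\<i>"]
  show ?thesis using assms by (simp add: algebra_simps)
qed

subsection \<open>The Poisson kernel\<close>

definition poisson_kernel :: "real \<Rightarrow> complex \<Rightarrow> real \<Rightarrow> real" where
  "poisson_kernel \<rho> w t = (\<rho>^2 - cmod w ^2) / (cmod (of_real \<rho> * cis t - w))^2"

lemma Re_add_div_diff:
  fixes z w :: complex
  shows "Re ((z + w)/(z - w)) = (cmod z^2 - cmod w^2)/cmod (z-w)^2"
proof -
  have "Re ((z + w)/(z - w)) = (Re (z+w) * Re (z-w) + Im (z+w) * Im (z-w)) / cmod (z-w)^2"
    by (simp add: Re_divide')
  also have "Re (z+w) * Re (z-w) + Im (z+w) * Im (z-w) = cmod z^2 - cmod w^2"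
    unfolding cmod_power2 by (simp add: algebra_simps power2_eq_square)
  finally show ?thesis .
qed

lemma of_real_poisson_kernel_eq:
  fixes z w :: complex assumes "z \<noteq> w"
  shows "of_real ((cmod z^2 - cmod w^2)/cmod (z - w)^2) = z/(z-w) + cnj z/(cnj z - cnj w) - 1"
proof -
  have d: "z - w \<noteq> 0" "cnj z - cnj w \<noteq> 0" using assms by (auto simp: complex_eq_iff)
  have "of_real ((cmod z^2 - cmod w^2)/cmod (z - w)^2)
      = (z * cnj z - w * cnj w) / ((z - w) * cnj (z - w))"
    by (simp only: of_real_divide of_real_diff complex_norm_square)
  also have "\<dots> = (z * (cnj z - cnj w) + cnj z * (z - w) - (z - w) * (cnj z - cnj w))
                  / ((z - w) * (cnj z - cnj w))"
    by (simp add: algebra_simps)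
  also have "\<dots> = z/(z-w) + cnj z/(cnj z - cnj w) - 1"
    using d by (simp add: add_divide_distrib diff_divide_distrib)
  finally show ?thesis .
qed

lemma poisson_kernel_nonneg:
  assumes "cmod w < \<rho>"
  shows "0 \<le> poisson_kernel \<rho> w t"
  unfolding poisson_kernel_def using assms by (intro divide_nonneg_nonneg) (auto intro!: power_mono)

lemma poisson_kernel_le:
  assumes "cmod a < \<rho>"
  shows "poisson_kernel \<rho> a t \<le> (\<rho> + cmod a) / (\<rho> - cmod a)"
proof -
  have d: "\<rho> - cmod a \<le> cmod (of_real \<rho> * cis t - a)"
    using norm_triangle_ineq2[of "of_real \<rho> * cis t" a] assms by auto
  have "poisson_kernel \<rho> a t \<le> (\<rho>^2 - cmod a^2) / (\<rho> - cmod a)^2"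
    unfolding poisson_kernel_def using assms d power_mono[of "cmod a" \<rho> 2]
    by (intro divide_left_mono power_mono mult_pos_pos) (auto intro!: power_strict_mono)
  also have "\<dots> = (\<rho> + cmod a) / (\<rho> - cmod a)"
    using assms by (simp add: power2_eq_square square_diff_square_factored)
  finally show ?thesis .
qed

lemma continuous_on_poisson_kernel:
  assumes "cmod w < \<rho>"
  shows "continuous_on S (\<lambda>t. poisson_kernel \<rho> w t)"
proof -
  have "cmod (of_real \<rho> * cis t - w) \<noteq> 0" for t
    using assms by auto
  then show ?thesis unfolding poisson_kernel_def by (intro continuous_intros) auto
qed

text \<open>The factor \<open>\<rho>\<^sup>2/(\<rho>\<^sup>2 - cnj w \<cdot> z)\<close> is holomorphic on the closed disk and equals
  \<open>z\<^sup>* / (z\<^sup>* - w\<^sup>*)\<close> on its boundary, which turns the Poisson kernel into a sum of Cauchy kernels.\<close>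

lemma poisson_integral_holomorphic:
  fixes h :: "complex \<Rightarrow> complex"
  assumes hol: "h holomorphic_on cball 0 \<rho>" and w: "cmod w < \<rho>"
  shows "((\<lambda>t. of_real (poisson_kernel \<rho> w t) * h (of_real \<rho> * cis t)) has_integral (2*pi*h w))
           {0..2*pi}"
proof -
  have rho: "\<rho> > 0" using w norm_ge_zero[of w] by linarith
  define k where "k z = h z * (of_real (\<rho>^2) / (of_real (\<rho>^2) - cnj w * z))" for z
  have nz: "of_real (\<rho>^2) - cnj w * z \<noteq> 0" if "z \<in> cball 0 \<rho>" for z
  proof
    assume "of_real (\<rho>^2) - cnj w * z = 0"
    then have "cmod (cnj w * z) = \<rho>^2" by (metis eq_iff_diff_eq_0 norm_of_real abs_power2 real_norm_def)
    moreover have "cmod (cnj w * z) < \<rho>^2"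
    proof -
      have "cmod (cnj w * z) = cmod w * cmod z" by (simp add: norm_mult)
      also have "\<dots> \<le> cmod w * \<rho>" using that by (intro mult_left_mono) auto
      also have "\<dots> < \<rho> * \<rho>" using w rho by (intro mult_strict_right_mono) auto
      finally show ?thesis by (simp add: power2_eq_square)
    qed
    ultimately show False by simp
  qed
  have kh: "k holomorphic_on cball 0 \<rho>"
    unfolding k_def using nz by (intro holomorphic_intros hol) auto
  have "((\<lambda>t. h (of_real \<rho> * cis t) * (of_real \<rho> * cis t) / (of_real \<rho> * cis t - w)
               + k (of_real \<rho> * cis t) - h (of_real \<rho> * cis t))
            has_integral (2*pi*h w + 2*pi*h 0 - 2*pi*h 0)) {0..2*pi}"
    using higher_deriv_integral_circle_param[OF kh rho, of 0]
          higher_deriv_integral_circle_param[OF hol rho, of 0] rho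
    by (intro has_integral_diff has_integral_add Cauchy_integral_circle_param[OF hol w])
       (auto simp: k_def)
  then have I: "((\<lambda>t. h (of_real \<rho> * cis t) * (of_real \<rho> * cis t) / (of_real \<rho> * cis t - w)
               + k (of_real \<rho> * cis t) - h (of_real \<rho> * cis t)) has_integral (2*pi*h w)) {0..2*pi}"
    by simp
  show ?thesis
  proof (rule has_integral_eq[OF _ I])
    fix t
    define z where "z = complex_of_real \<rho> * cis t"
    have zn: "cmod z = \<rho>" using rho by (simp add: z_def)
    have zw: "z \<noteq> w" using zn w by auto
    have z0: "z \<noteq> 0" using zn rho by auto
    have "complex_of_real (\<rho>^2) = z * cnj z" using zn complex_norm_square[of z] by simp
    then have "complex_of_real (\<rho>^2) / (complex_of_real (\<rho>^2) - cnj w * z)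
        = (z * cnj z) / (z * (cnj z - cnj w))"
      by (simp add: algebra_simps)
    also have "\<dots> = cnj z / (cnj z - cnj w)" using z0 by simp
    finally have k: "k z = h z * (cnj z / (cnj z - cnj w))" by (simp add: k_def)
    have P: "of_real (poisson_kernel \<rho> w t) = z/(z-w) + cnj z/(cnj z - cnj w) - 1"
      using of_real_poisson_kernel_eq[OF zw] zn by (simp add: poisson_kernel_def z_def)
    show "h z * z / (z - w) + k z - h z = of_real (poisson_kernel \<rho> w t) * h z"
      unfolding k P by (simp add: algebra_simps)
  qed
qed

lemma poisson_kernel_has_integral:
  assumes "cmod w < \<rho>"
  shows "((\<lambda>t. poisson_kernel \<rho> w t) has_integral (2*pi)) {0..2*pi}"
  using has_integral_Re[OF poisson_integral_holomorphic[OF _ assms, of "\<lambda>_. 1"]] by simp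

text \<open>Expand \<open>\<integral> P(w, t) |g(\<rho> e\<^sup>i\<^sup>t) - g w|\<^sup>2 dt \<ge> 0\<close> using the Poisson representations
  of \<open>g\<close> and of \<open>1\<close>.\<close>

lemma norm_sq_le_poisson_integral:
  fixes g :: "complex \<Rightarrow> complex"
  assumes hol: "g holomorphic_on cball 0 \<rho>" and w: "cmod w < \<rho>"
  shows "2*pi * cmod (g w)^2
           \<le> integral {0..2*pi} (\<lambda>t. poisson_kernel \<rho> w t * cmod (g (of_real \<rho> * cis t))^2)"
proof -
  define c where "c = g w"
  define P where "P = poisson_kernel \<rho> w"
  define G where "G t = g (of_real \<rho> * cis t)" for t
  define J where "J = integral {0..2*pi} (\<lambda>t. P t * cmod (G t)^2)"
  have re: "Re (cnj c * (2*pi*c)) = 2*pi*cmod c^2"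
    unfolding cmod_power2 by (simp add: algebra_simps power2_eq_square)
  have C: "((\<lambda>t. Re (cnj c * (of_real (P t) * G t))) has_integral (2*pi*cmod c^2)) {0..2*pi}"
    using has_integral_Re[OF has_integral_mult_right[OF poisson_integral_holomorphic[OF hol w], of "cnj c"]]
    unfolding P_def G_def c_def re[unfolded c_def] .
  have rho: "\<rho> \<ge> 0" using w norm_ge_zero[of w] by linarith
  have "(\<lambda>t. P t * cmod (G t)^2) integrable_on {0..2*pi}"
    unfolding P_def G_def using holomorphic_on_imp_continuous_on[OF hol] rho
    by (intro integrable_continuous_interval continuous_intros continuous_on_poisson_kernel[OF w]
          continuous_on_circle_comp)
  then have D: "((\<lambda>t. P t * cmod (G t)^2) has_integral J) {0..2*pi}"
    unfolding J_def by (rule integrable_integral)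
  have E: "((\<lambda>t. P t * cmod (G t)^2 - 2 * Re (cnj c * (of_real (P t) * G t)) + cmod c ^2 * P t)
        has_integral (J - 2 * (2*pi*cmod c^2) + cmod c^2 * (2*pi))) {0..2*pi}"
    unfolding P_def
    by (intro has_integral_add has_integral_diff D[unfolded P_def] has_integral_mult_right
          poisson_kernel_has_integral[OF w] C[unfolded P_def])
  have "0 \<le> J - 2 * (2*pi*cmod c^2) + cmod c^2 * (2*pi)"
  proof (rule has_integral_nonneg[OF E])
    fix t
    have "P t * cmod (G t)^2 - 2 * Re (cnj c * (of_real (P t) * G t)) + cmod c^2 * P t
          = P t * cmod (G t - c)^2"
      unfolding cmod_power2 by (simp add: power2_eq_square algebra_simps)
    then show "0 \<le> P t * cmod (G t)^2 - 2 * Re (cnj c * (of_real (P t) * G t)) + cmod c ^2 * P t"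
      using poisson_kernel_nonneg[OF w] by (simp add: P_def)
  qed
  then show ?thesis unfolding J_def P_def G_def c_def by simp
qed

text \<open>\<open>P(u(z), t)\<close> is the real part of the holomorphic function \<open>(\<zeta> + u(z))/(\<zeta> - u(z))\<close>,
  \<open>\<zeta> = \<rho> e\<^sup>i\<^sup>t\<close>, hence harmonic in \<open>z\<close> and equal to its mean on every circle.\<close>

lemma poisson_kernel_comp_mean:
  fixes u :: "complex \<Rightarrow> complex"
  assumes uh: "u holomorphic_on ball 0 1" and ub: "\<And>z. z \<in> ball 0 1 \<Longrightarrow> cmod (u z) < \<rho>"
    and r: "0 < r" "r < 1"
  shows "((\<lambda>s. poisson_kernel \<rho> (u (of_real r * cis s)) t) has_integral
            (2*pi*poisson_kernel \<rho> (u 0) t)) {0..2*pi}"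
proof -
  define \<zeta> where "\<zeta> = of_real \<rho> * cis t"
  define K where "K z = (\<zeta> + u z) / (\<zeta> - u z)" for z
  have "cmod (u 0) < \<rho>" using ub[of 0] by simp
  then have rho: "\<rho> > 0" using norm_ge_zero[of "u 0"] by linarith
  have zn: "cmod \<zeta> = \<rho>" using rho by (simp add: \<zeta>_def)
  have nz: "\<zeta> - u z \<noteq> 0" if "z \<in> ball 0 1" for z
    using ub[OF that] zn by auto
  have "K holomorphic_on ball 0 1" unfolding K_def using nz
    by (intro holomorphic_intros uh) auto
  then have Kh: "K holomorphic_on cball 0 r" by (rule holomorphic_on_subset) (use r in auto)
  have re: "Re (K z) = poisson_kernel \<rho> (u z) t" for z
    by (simp add: K_def Re_add_div_diff poisson_kernel_def zn \<zeta>_def)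
  from has_integral_Re[OF higher_deriv_integral_circle_param[OF Kh r(1), of 0]]
  show ?thesis by (simp add: re)
qed

lemma continuous_on_poisson_kernel_comp_mult:
  fixes u :: "complex \<Rightarrow> complex" and G :: "real \<Rightarrow> real"
  assumes uc: "continuous_on (ball 0 1) u" and ub: "\<And>z. z \<in> ball 0 1 \<Longrightarrow> cmod (u z) < \<rho>"
    and r: "0 \<le> r" "r < 1" and G: "continuous_on UNIV G"
  shows "continuous_on S (\<lambda>(s, t). poisson_kernel \<rho> (u (of_real r * cis s)) t * G t)"
proof -
  have inb: "of_real r * cis s \<in> ball 0 1" for s using r by simp
  have "cmod (u (of_real r * cis s)) < \<rho>" for s using ub[OF inb] .
  then have "cmod (of_real \<rho> * cis t - u (of_real r * cis s)) \<noteq> 0" for s t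
    by (metis abs_of_pos eq_iff_diff_eq_0 less_irrefl norm_eq_zero norm_ge_zero le_less_trans
        norm_of_real_mult_cis)
  moreover have "continuous_on S (\<lambda>p. u (of_real r * cis (fst p)))"
    using inb by (intro continuous_on_compose2[OF uc] continuous_intros) auto
  moreover have "continuous_on S (\<lambda>p. G (snd p))"
    by (intro continuous_on_compose2[OF G] continuous_intros) auto
  ultimately show ?thesis
    unfolding poisson_kernel_def case_prod_beta' by (intro continuous_intros) auto
qed

lemma integral_poisson_kernel_comp_swap:
  fixes u :: "complex \<Rightarrow> complex" and G :: "real \<Rightarrow> real"
  assumes uh: "u holomorphic_on ball 0 1" and ub: "\<And>z. z \<in> ball 0 1 \<Longrightarrow> cmod (u z) < \<rho>"
    and r: "0 < r" "r < 1" and G: "continuous_on UNIV G"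
  shows "integral {0..2*pi} (\<lambda>s. integral {0..2*pi} (\<lambda>t. poisson_kernel \<rho> (u (of_real r * cis s)) t * G t))
       = 2*pi * integral {0..2*pi} (\<lambda>t. poisson_kernel \<rho> (u 0) t * G t)"
proof -
  define Q where "Q s = u (of_real r * cis s)" for s
  define F where "F s t = poisson_kernel \<rho> (Q s) t * G t" for s t
  have contF: "continuous_on UNIV (\<lambda>(s, t). F s t)"
    unfolding F_def Q_def using r
    by (intro continuous_on_poisson_kernel_comp_mult holomorphic_on_imp_continuous_on uh ub G) auto
  have "integral {0..2*pi} (\<lambda>s. integral {0..2*pi} (F s))
      = integral {0..2*pi} (\<lambda>t. integral {0..2*pi} (\<lambda>s. F s t))"
    using integral_swap_continuous[of 0 0 "2*pi" "2*pi" F] continuous_on_subset[OF contF] by simp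
  also have "\<dots> = integral {0..2*pi} (\<lambda>t. 2*pi * (poisson_kernel \<rho> (u 0) t * G t))"
  proof (rule integral_cong)
    fix t
    have "((\<lambda>s. F s t) has_integral (2*pi*poisson_kernel \<rho> (u 0) t) * G t) {0..2*pi}"
      unfolding F_def Q_def by (intro has_integral_mult_left poisson_kernel_comp_mean uh ub r) auto
    then show "integral {0..2*pi} (\<lambda>s. F s t) = 2*pi * (poisson_kernel \<rho> (u 0) t * G t)"
      by (simp add: integral_unique mult.assoc)
  qed
  moreover have "F s = (\<lambda>t. poisson_kernel \<rho> (u (of_real r * cis s)) t * G t)" for s
    by (simp add: F_def Q_def fun_eq_iff)
  ultimately show ?thesis by simp
qed

lemma integral_circle_comp_le:
  fixes g u :: "complex \<Rightarrow> complex"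
  assumes gh: "g holomorphic_on cball 0 \<rho>" and uh: "u holomorphic_on ball 0 1"
    and ub: "\<And>z. z \<in> ball 0 1 \<Longrightarrow> cmod (u z) < \<rho>" and r: "0 < r" "r < 1"
  shows "integral {0..2*pi} (\<lambda>s. cmod (g (u (of_real r * cis s)))^2)
     \<le> (\<rho> + cmod (u 0)) / (\<rho> - cmod (u 0)) * integral {0..2*pi} (\<lambda>t. cmod (g (of_real \<rho> * cis t))^2)"
proof -
  define Q where "Q s = u (of_real r * cis s)" for s
  define G where "G t = cmod (g (of_real \<rho> * cis t))^2" for t
  define C where "C = (\<rho> + cmod (u 0)) / (\<rho> - cmod (u 0))"
  have u0: "cmod (u 0) < \<rho>" using ub[of 0] by simp
  have rho: "\<rho> > 0" using u0 norm_ge_zero[of "u 0"] by linarith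
  have inb: "of_real r * cis s \<in> ball 0 1" for s using r by simp
  have Qb: "cmod (Q s) < \<rho>" for s unfolding Q_def using ub[OF inb] .
  have contg: "continuous_on (cball 0 \<rho>) g" using gh by (rule holomorphic_on_imp_continuous_on)
  have contG: "continuous_on UNIV G"
    unfolding G_def using rho by (intro continuous_intros continuous_on_circle_comp[OF contg]) auto
  have contQ: "continuous_on {0..2*pi} Q"
    unfolding Q_def using inb
    by (intro continuous_on_compose2[OF holomorphic_on_imp_continuous_on[OF uh]] continuous_intros) auto
  have "integral {0..2*pi} (\<lambda>s. cmod (g (Q s))^2)
      \<le> integral {0..2*pi} (\<lambda>s. 1/(2*pi) * integral {0..2*pi} (\<lambda>t. poisson_kernel \<rho> (Q s) t * G t))"
  proof (rule integral_le)
    show "(\<lambda>s. cmod (g (Q s))^2) integrable_on {0..2*pi}"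
      using Qb by (intro integrable_continuous_interval continuous_intros
          continuous_on_compose2[OF contg contQ]) (auto simp: less_imp_le)
    have "continuous_on UNIV (\<lambda>(s, t). poisson_kernel \<rho> (Q s) t * G t)"
      unfolding Q_def using r
      by (intro continuous_on_poisson_kernel_comp_mult holomorphic_on_imp_continuous_on uh ub contG) auto
    then have "continuous_on UNIV (\<lambda>s. integral (cbox 0 (2*pi)) (\<lambda>t. poisson_kernel \<rho> (Q s) t * G t))"
      by (intro integral_continuous_on_param) (auto intro: continuous_on_subset)
    then show "(\<lambda>s. 1/(2*pi) * integral {0..2*pi} (\<lambda>t. poisson_kernel \<rho> (Q s) t * G t)) integrable_on {0..2*pi}"
      by (intro integrable_continuous_interval continuous_intros) (auto intro: continuous_on_subset)
    fix s
    show "cmod (g (Q s))^2 \<le> 1/(2*pi) * integral {0..2*pi} (\<lambda>t. poisson_kernel \<rho> (Q s) t * G t)"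
      using norm_sq_le_poisson_integral[OF gh Qb[of s]] unfolding G_def by (simp add: field_simps)
  qed
  also have "\<dots> = integral {0..2*pi} (\<lambda>t. poisson_kernel \<rho> (u 0) t * G t)"
    using integral_poisson_kernel_comp_swap[OF uh ub r contG] by (simp add: Q_def)
  also have "\<dots> \<le> integral {0..2*pi} (\<lambda>t. C * G t)"
  proof (rule integral_le)
    show "(\<lambda>t. poisson_kernel \<rho> (u 0) t * G t) integrable_on {0..2*pi}"
      by (intro integrable_continuous_interval continuous_intros continuous_on_poisson_kernel[OF u0]
          continuous_on_subset[OF contG]) auto
    show "(\<lambda>t. C * G t) integrable_on {0..2*pi}"
      by (intro integrable_continuous_interval continuous_intros continuous_on_subset[OF contG]) auto
    show "poisson_kernel \<rho> (u 0) t * G t \<le> C * G t" for t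
      unfolding C_def G_def using poisson_kernel_le[OF u0] by (intro mult_right_mono) auto
  qed
  finally show ?thesis by (simp add: C_def G_def Q_def)
qed

subsection \<open>Taylor coefficients on circles\<close>

definition taylor_coeff :: "(complex \<Rightarrow> complex) \<Rightarrow> nat \<Rightarrow> complex" where
  "taylor_coeff F k = (deriv ^^ k) F 0 / fact k"

lemma circle_power_mult_cnj:
  "(complex_of_real r * cis t)^j * cnj ((complex_of_real r * cis t)^j) = of_real (r^(2*j))"
proof -
  have "(complex_of_real r * cis t)^j * cnj ((complex_of_real r * cis t)^j)
       = of_real (cmod ((complex_of_real r * cis t)^j)^2)"
    by (simp only: complex_norm_square)
  also have "\<dots> = of_real (r^(2*j))"
  proof -
    have "(\<bar>r\<bar>^j)^2 = r^(2*j)" by (metis power2_abs power_abs power_mult mult.commute)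
    then show ?thesis by (simp add: norm_power)
  qed
  finally show ?thesis .
qed

lemma has_integral_circle_power_mult_cnj_less:
  assumes r: "r > 0" and kj: "j < k"
  shows "((\<lambda>t. (complex_of_real r * cis t)^k * cnj ((complex_of_real r * cis t)^j)) has_integral 0)
           {0..2*pi}"
proof -
  have "(\<lambda>z::complex. z^(k-j)) holomorphic_on cball 0 r" by (intro holomorphic_intros)
  from higher_deriv_integral_circle_param[OF this r, of 0] kj
  have "((\<lambda>t. (complex_of_real r * cis t)^(k-j)) has_integral 0) {0..2*pi}"
    by (simp add: power_0_left)
  from has_integral_mult_left[OF this, of "of_real (r^(2*j))"]
  have "((\<lambda>t. (complex_of_real r * cis t)^(k-j) * of_real (r^(2*j))) has_integral 0) {0..2*pi}"
    by simp
  moreover have "(complex_of_real r * cis t)^k * cnj ((complex_of_real r * cis t)^j)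
      = (complex_of_real r * cis t)^(k-j) * of_real (r^(2*j))" for t
  proof -
    have "(complex_of_real r * cis t)^k
        = (complex_of_real r * cis t)^(k-j) * (complex_of_real r * cis t)^j"
      using kj by (simp add: power_add[symmetric])
    then show ?thesis using circle_power_mult_cnj[of r t j] by (simp add: mult.assoc)
  qed
  ultimately show ?thesis by simp
qed

lemma has_integral_circle_power_mult_cnj:
  assumes r: "r > 0"
  shows "((\<lambda>t. (complex_of_real r * cis t)^k * cnj ((complex_of_real r * cis t)^j))
     has_integral (if k = j then of_real (2*pi*r^(2*k)) else 0)) {0..2*pi}"
proof (cases k j rule: linorder_cases)
  case less
  from has_integral_circle_power_mult_cnj_less[OF r less]
  have "(cnj \<circ> (\<lambda>t. (complex_of_real r * cis t)^j * cnj ((complex_of_real r * cis t)^k))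
          has_integral cnj 0) {0..2*pi}"
    by (subst has_integral_cnj) simp
  then show ?thesis using less by (simp add: o_def mult.commute)
next
  case equal
  have "((\<lambda>t. of_real (r^(2*j)) :: complex) has_integral of_real (2*pi*r^(2*j))) {0..2*pi}"
    using has_integral_const_real[of "of_real (r^(2*j)) :: complex" 0 "2*pi"]
    by (simp add: scaleR_conv_of_real)
  then show ?thesis unfolding equal by (simp only: circle_power_mult_cnj if_P[OF refl])
next
  case greater
  then show ?thesis using has_integral_circle_power_mult_cnj_less[OF r greater] by simp
qed

lemma has_integral_circle_mult_cnj_power:
  fixes F :: "complex \<Rightarrow> complex"
  assumes hol: "F holomorphic_on cball 0 r" and r: "r > 0"
  shows "((\<lambda>t. F (complex_of_real r * cis t) * cnj ((complex_of_real r * cis t)^j))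
     has_integral (of_real (2*pi*r^(2*j)) * taylor_coeff F j)) {0..2*pi}"
proof -
  have "F (complex_of_real r * cis t) / (complex_of_real r * cis t)^j * of_real (r^(2*j)) =
      F (complex_of_real r * cis t) * cnj ((complex_of_real r * cis t)^j)" for t
  proof -
    have "(complex_of_real r * cis t)^j \<noteq> 0" using r by simp
    then have "cnj ((complex_of_real r * cis t)^j) = of_real (r^(2*j)) / (complex_of_real r * cis t)^j"
      using circle_power_mult_cnj[of r t j] by (simp add: field_simps)
    then show ?thesis by simp
  qed
  with has_integral_mult_left[OF higher_deriv_integral_circle_param[OF hol r, of j],
      of "of_real (r^(2*j))"]
  show ?thesis by (simp add: taylor_coeff_def mult_ac)
qed

text \<open>With \<open>S\<close> the \<open>K\<close>-th Taylor polynomial, both \<open>F \<cdot> S\<^sup>*\<close> and \<open>S \<cdot> S\<^sup>*\<close> integrate to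
  \<open>2\<pi>\<Sum>\<^sub>k\<^sub><\<^sub>K |a\<^sub>k|\<^sup>2 r\<^sup>2\<^sup>k\<close>, hence so does \<open>|F|\<^sup>2 - |F - S|\<^sup>2\<close>.\<close>

lemma integral_circle_norm_sq_split:
  fixes F :: "complex \<Rightarrow> complex"
  assumes hol: "F holomorphic_on cball 0 r" and r: "r > 0"
  shows "integral {0..2*pi} (\<lambda>t. cmod (F (complex_of_real r * cis t))^2)
     = 2*pi * (\<Sum>k<K. cmod (taylor_coeff F k)^2 * r^(2*k))
       + integral {0..2*pi} (\<lambda>t. cmod (F (complex_of_real r * cis t)
            - (\<Sum>k<K. taylor_coeff F k * (complex_of_real r * cis t)^k))^2)"
proof -
  define a where "a = taylor_coeff F"
  define z where "z t = complex_of_real r * cis t" for t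
  define S where "S t = (\<Sum>k<K. a k * (z t)^k)" for t
  define T where "T = (\<Sum>k<K. cmod (a k)^2 * r^(2*k))"
  define J where "J = integral {0..2*pi} (\<lambda>t. cmod (F (z t))^2)"
  have a_sq: "cnj (a k) * (of_real (2*pi*r^(2*k)) * a k) = of_real (2*pi) * of_real (cmod (a k)^2 * r^(2*k))"
    for k
    using complex_norm_square[of "a k"] by (simp add: mult_ac)
  have "((\<lambda>t. \<Sum>j<K. cnj (a j) * (F (z t) * cnj ((z t)^j)))
      has_integral (\<Sum>j<K. cnj (a j) * (of_real (2*pi*r^(2*j)) * a j))) {0..2*pi}"
    unfolding z_def a_def
    by (intro has_integral_sum has_integral_mult_right has_integral_circle_mult_cnj_power hol r) auto
  moreover have sum_eq: "(\<Sum>j<K. cnj (a j) * (of_real (2*pi*r^(2*j)) * a j)) = of_real (2*pi*T)"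
    unfolding a_sq T_def by (simp add: sum_distrib_left)
  moreover have "(\<Sum>j<K. cnj (a j) * (F (z t) * cnj ((z t)^j))) = F (z t) * cnj (S t)" for t
    by (simp add: S_def sum_distrib_left mult_ac)
  ultimately have A: "((\<lambda>t. F (z t) * cnj (S t)) has_integral of_real (2*pi*T)) {0..2*pi}"
    by simp
  have "((\<lambda>t. \<Sum>k<K. \<Sum>j<K. (a k * cnj (a j)) * ((z t)^k * cnj ((z t)^j)))
      has_integral (\<Sum>k<K. \<Sum>j<K. (a k * cnj (a j)) *
          (if k = j then of_real (2*pi*r^(2*k)) else 0))) {0..2*pi}"
    unfolding z_def by (intro has_integral_sum has_integral_mult_right has_integral_circle_power_mult_cnj r) auto
  moreover have "(\<Sum>k<K. \<Sum>j<K. (a k * cnj (a j)) *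
          (if k = j then of_real (2*pi*r^(2*k)) else (0::complex))) = of_real (2*pi*T)"
    unfolding sum_eq[symmetric] by (intro sum.cong refl) (simp add: if_distrib mult_ac cong: if_cong)
  moreover have "(\<Sum>k<K. \<Sum>j<K. (a k * cnj (a j)) * ((z t)^k * cnj ((z t)^j))) = S t * cnj (S t)" for t
    by (simp add: S_def sum_product mult_ac)
  ultimately have B: "((\<lambda>t. S t * cnj (S t)) has_integral of_real (2*pi*T)) {0..2*pi}"
    by simp
  have "(\<lambda>t. cmod (F (z t))^2) integrable_on {0..2*pi}"
    unfolding z_def using r holomorphic_on_imp_continuous_on[OF hol]
    by (intro integrable_continuous_interval continuous_intros continuous_on_circle_comp) auto
  then have D: "((\<lambda>t. cmod (F (z t))^2) has_integral J) {0..2*pi}"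
    unfolding J_def by (rule integrable_integral)
  have "((\<lambda>t. cmod (F (z t))^2 - 2 * Re (F (z t) * cnj (S t)) + Re (S t * cnj (S t)))
      has_integral (J - 2 * Re (of_real (2*pi*T)) + Re (of_real (2*pi*T)))) {0..2*pi}"
    by (intro has_integral_add has_integral_diff has_integral_mult_right D has_integral_Re A B)
  moreover have "cmod (F (z t))^2 - 2 * Re (F (z t) * cnj (S t)) + Re (S t * cnj (S t))
      = cmod (F (z t) - S t)^2" for t
    unfolding cmod_power2 by (simp add: power2_eq_square algebra_simps)
  ultimately have "((\<lambda>t. cmod (F (z t) - S t)^2) has_integral (J - 2*pi*T)) {0..2*pi}"
    by (simp add: mult_ac)
  then have "integral {0..2*pi} (\<lambda>t. cmod (F (z t) - S t)^2) = J - 2*pi*T"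
    by (rule integral_unique)
  then show ?thesis unfolding J_def T_def S_def z_def a_def by simp
qed

text \<open>Cauchy's inequality on a slightly larger circle makes the Taylor remainder decay geometrically.\<close>

lemma taylor_remainder_circle_bound:
  fixes F :: "complex \<Rightarrow> complex"
  assumes hol: "F holomorphic_on ball 0 R" and r: "0 < r" "r < R"
  obtains M q where "0 \<le> M" "0 \<le> q" "q < 1"
    "\<And>K t. cmod (F (complex_of_real r * cis t)
              - (\<Sum>k<K. taylor_coeff F k * (complex_of_real r * cis t)^k)) \<le> M * q^K"
proof -
  define r' where "r' = (r + R) / 2"
  have r': "r < r'" "r' < R" "0 < r'" using r by (auto simp: r'_def)
  have "cball 0 r' \<subseteq> ball 0 R" using r' by auto
  then have contF: "continuous_on (cball 0 r') F"
    using holomorphic_on_imp_continuous_on holomorphic_on_subset[OF hol] by blast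
  have "bounded (F ` cball 0 r')"
    by (intro compact_imp_bounded compact_continuous_image contF) auto
  then obtain B where B: "\<And>z. z \<in> cball 0 r' \<Longrightarrow> cmod (F z) \<le> B"
    unfolding bounded_iff by blast
  have B0: "0 \<le> B" using B[of 0] r' by (auto intro: order_trans[OF norm_ge_zero])
  have holr': "F holomorphic_on ball 0 r'" using hol by (rule holomorphic_on_subset) (use r' in auto)
  have coeff_le: "cmod (taylor_coeff F k) \<le> B / r'^k" for k
  proof -
    have "cmod ((deriv ^^ k) F 0) \<le> fact k * B / r'^k"
      by (rule Cauchy_inequality[OF holr' contF r'(3)]) (auto intro: B simp: dist_norm)
    then show ?thesis unfolding taylor_coeff_def by (simp add: norm_divide field_simps)
  qed
  define q where "q = r / r'"
  have q: "0 \<le> q" "q < 1" using r r' by (auto simp: q_def)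
  define M where "M = B / (1 - q)"
  have M0: "0 \<le> M" using B0 q by (simp add: M_def)
  show ?thesis
  proof (rule that[OF M0 q])
    fix K t
    define z where "z = complex_of_real r * cis t"
    have zn: "cmod z = r" using r by (simp add: z_def)
    then have "(\<lambda>k. taylor_coeff F k * z^k) sums F z"
      using holomorphic_power_series[OF hol] r by (simp add: taylor_coeff_def)
    from sums_split_initial_segment[OF this, of K]
    have S: "(\<lambda>i. taylor_coeff F (i + K) * z^(i + K)) sums (F z - (\<Sum>k<K. taylor_coeff F k * z^k))" .
    have bd: "cmod (taylor_coeff F (i + K) * z^(i + K)) \<le> B * q^K * q^i" for i
    proof -
      have "cmod (taylor_coeff F (i + K) * z^(i + K)) = cmod (taylor_coeff F (i + K)) * r^(i+K)"
        by (simp add: norm_mult norm_power zn)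
      also have "\<dots> \<le> B / r'^(i+K) * r^(i+K)"
        using coeff_le r by (intro mult_right_mono) auto
      also have "\<dots> = B * q^K * q^i" by (simp add: q_def power_divide power_add mult_ac)
      finally show ?thesis .
    qed
    have sg: "summable (\<lambda>i. B * q^K * q^i)" using q by (intro summable_mult summable_geometric) auto
    have "cmod (F z - (\<Sum>k<K. taylor_coeff F k * z^k)) \<le> (\<Sum>i. B * q^K * q^i)"
      using norm_suminf_le[OF bd sg] sums_unique[OF S] by simp
    also have "\<dots> = M * q^K" using q by (simp add: suminf_mult suminf_geometric M_def)
    finally show "cmod (F (complex_of_real r * cis t)
        - (\<Sum>k<K. taylor_coeff F k * (complex_of_real r * cis t)^k)) \<le> M * q^K"
      by (simp add: z_def)
  qed
qed

subsection \<open>The maximal binomial weight\<close>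

lemma binomial_weight_Suc:
  fixes b :: real assumes "n \<le> m"
  shows "real (Suc m choose n) * b^(Suc m - n) * real (Suc m - n)
       = real (Suc m) * b * (real (m choose n) * b^(m - n))"
proof -
  have "(Suc m - n) * (Suc m choose n) = Suc m * (m choose n)"
    using binomial_absorb_comp[of "Suc m" n] by simp
  then have "real (Suc m - n) * real (Suc m choose n) = real (Suc m) * real (m choose n)"
    by (metis of_nat_mult)
  moreover have "b^(Suc m - n) = b * b^(m - n)" using assms by (simp add: Suc_diff_le)
  ultimately show ?thesis by (simp add: mult_ac)
qed

text \<open>The ratio of consecutive weights is \<open>(m+1) b / (m+1-n)\<close>, which is at least \<open>1\<close>
  exactly when \<open>m + 1 \<le> n/(1-b)\<close>.\<close>

lemma binomial_weight_le_floor: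
  fixes b :: real and n m :: nat
  assumes b: "0 < b" "b < 1" and nm: "n \<le> m"
  defines "N \<equiv> nat \<lfloor>real n / (1 - b)\<rfloor>"
  shows "real (m choose n) * b^(m - n) \<le> real (N choose n) * b^(N - n)"
proof -
  define t where "t m = real (m choose n) * b^(m - n)" for m
  have "real n \<le> real n / (1 - b)" using b by (simp add: field_simps mult_left_le)
  then have nN: "n \<le> N" unfolding N_def by (simp add: le_nat_iff le_floor_iff)
  have key: "real (Suc m - n) \<le> real (Suc m) * b \<longleftrightarrow> Suc m \<le> N" if "n \<le> m" for m
  proof -
    have "real (Suc m - n) \<le> real (Suc m) * b \<longleftrightarrow> real (Suc m) \<le> real n / (1 - b)"
      using b that by (simp add: of_nat_diff field_simps)
    also have "\<dots> \<longleftrightarrow> int (Suc m) \<le> \<lfloor>real n / (1 - b)\<rfloor>"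
      by (simp only: le_floor_iff of_int_of_nat_eq)
    also have "\<dots> \<longleftrightarrow> Suc m \<le> N" unfolding N_def by linarith
    finally show ?thesis .
  qed
  have ratio: "t (Suc m) * real (Suc m - n) = real (Suc m) * b * t m" if "n \<le> m" for m
    using binomial_weight_Suc[OF that] by (simp add: t_def)
  have t0: "0 \<le> t m" for m using b by (simp add: t_def)
  have up: "t m \<le> t (Suc m)" if "n \<le> m" "Suc m \<le> N" for m
  proof -
    have "real (Suc m - n) * t m \<le> real (Suc m) * b * t m"
      using key[OF that(1)] that(2) t0 by (intro mult_right_mono) auto
    then have "t m * real (Suc m - n) \<le> t (Suc m) * real (Suc m - n)"
      using ratio[OF that(1)] by (simp add: mult.commute)
    then show ?thesis by (rule mult_right_le_imp_le) (use that(1) in simp)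
  qed
  have down: "t (Suc m) \<le> t m" if "N \<le> m" for m
  proof -
    have "n \<le> m" using nN that by simp
    then have "real (Suc m) * b * t m \<le> real (Suc m - n) * t m"
      using key[of m] that t0 by (intro mult_right_mono) auto
    then have "t (Suc m) * real (Suc m - n) \<le> t m * real (Suc m - n)"
      using ratio[OF \<open>n \<le> m\<close>] by (simp add: mult.commute)
    then show ?thesis by (rule mult_right_le_imp_le) (use \<open>n \<le> m\<close> in simp)
  qed
  have "t m \<le> t N"
  proof (cases "m \<le> N")
    case True
    then show ?thesis
    proof (induction m rule: inc_induct)
      case (step k)
      then show ?case using up[of k] nm by simp
    qed simp
  next
    case False
    then have "N \<le> m" by simp
    then show ?thesis
      by (induction m rule: dec_induct) (use down in \<open>auto intro: order_trans\<close>)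
  qed
  then show ?thesis by (simp add: t_def)
qed

subsection \<open>Circle means and the Hardy norm\<close>

lemma taylor_partial_sum_le_h2_mean:
  fixes f :: "complex \<Rightarrow> complex"
  assumes hol: "f holomorphic_on ball 0 1" and r: "0 < r" "r < 1"
  shows "(\<Sum>k<K. cmod (taylor_coeff f k)^2 * r^(2*k)) \<le> h2_mean f r"
proof -
  have holc: "f holomorphic_on cball 0 r" using hol by (rule holomorphic_on_subset) (use r in auto)
  have "0 \<le> integral {0..2*pi} (\<lambda>t. cmod (f (complex_of_real r * cis t)
            - (\<Sum>k<K. taylor_coeff f k * (complex_of_real r * cis t)^k))^2)"
    by (cases "(\<lambda>t. cmod (f (complex_of_real r * cis t)
            - (\<Sum>k<K. taylor_coeff f k * (complex_of_real r * cis t)^k))^2) integrable_on {0..2*pi}")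
       (auto intro: integral_nonneg simp: not_integrable_integral)
  then have "2*pi*(\<Sum>k<K. cmod (taylor_coeff f k)^2 * r^(2*k))
      \<le> integral {0..2*pi} (\<lambda>t. cmod (f (complex_of_real r * cis t))^2)"
    using integral_circle_norm_sq_split[OF holc r(1), of K] by linarith
  then show ?thesis unfolding h2_mean_cis by (simp add: field_simps)
qed

lemma h2_mean_nonneg:
  "f holomorphic_on ball 0 1 \<Longrightarrow> 0 < r \<Longrightarrow> r < 1 \<Longrightarrow> 0 \<le> h2_mean f r"
  using taylor_partial_sum_le_h2_mean[of f r 0] by simp

lemma h2_mean_le_h2_norm_sq:
  assumes H: "in_H2 f" and r: "0 < r" "r < 1"
  shows "h2_mean f r \<le> h2_norm f ^ 2"
proof -
  have hol: "f holomorphic_on ball 0 1" and bdd: "bdd_above (h2_mean f ` {0<..<1})"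
    using H by (auto simp: in_H2_def)
  have le: "h2_mean f r \<le> (SUP r\<in>{0<..<1}. h2_mean f r)"
    by (rule cSUP_upper[OF _ bdd]) (use r in auto)
  moreover have "0 \<le> (SUP r\<in>{0<..<1}. h2_mean f r)"
    using le h2_mean_nonneg[OF hol r] by linarith
  ultimately show ?thesis unfolding h2_norm_def by simp
qed

lemma h2_norm_nonneg:
  assumes "in_H2 f" shows "0 \<le> h2_norm f"
proof -
  have "h2_mean f (1/2) \<le> (SUP r\<in>{0<..<1}. h2_mean f r)"
    using assms by (intro cSUP_upper) (auto simp: in_H2_def)
  moreover have "0 \<le> h2_mean f (1/2)" using assms by (intro h2_mean_nonneg) (auto simp: in_H2_def)
  ultimately show ?thesis unfolding h2_norm_def by simp
qed

lemma taylor_partial_sum_le_h2_norm_sq: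
  assumes H: "in_H2 f"
  shows "(\<Sum>k<K. cmod (taylor_coeff f k)^2) \<le> h2_norm f ^ 2"
proof -
  have hol: "f holomorphic_on ball 0 1" using H by (auto simp: in_H2_def)
  have "((\<lambda>r. \<Sum>k<K. cmod (taylor_coeff f k)^2 * r^(2*k))
          \<longlongrightarrow> (\<Sum>k<K. cmod (taylor_coeff f k)^2 * 1^(2*k))) (at_left (1::real))"
    by (intro tendsto_intros)
  moreover have "eventually (\<lambda>r. (\<Sum>k<K. cmod (taylor_coeff f k)^2 * r^(2*k)) \<le> h2_norm f ^ 2)
      (at_left (1::real))"
    using eventually_at_left_real[of 0 1, simplified]
    by eventually_elim
      (use taylor_partial_sum_le_h2_mean[OF hol] h2_mean_le_h2_norm_sq[OF H] in \<open>auto intro: order_trans\<close>)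
  ultimately have "(\<Sum>k<K. cmod (taylor_coeff f k)^2 * 1^(2*k)) \<le> h2_norm f ^ 2"
    by (rule tendsto_upperbound) simp
  then show ?thesis by simp
qed

text \<open>Conversely, the circle mean is the limit of the partial sums, since the Taylor remainder
  tends to zero uniformly on the circle.\<close>

lemma h2_mean_le_of_taylor_partial_sums_le:
  fixes g :: "complex \<Rightarrow> complex"
  assumes hol: "g holomorphic_on ball 0 1" and r: "0 < r" "r < 1"
    and X: "\<And>K. (\<Sum>k<K. cmod (taylor_coeff g k)^2 * r^(2*k)) \<le> X"
  shows "h2_mean g r \<le> X"
proof -
  obtain M q where "0 \<le> M" and q: "0 \<le> q" "q < 1"
    and rem: "\<And>K t. cmod (g (complex_of_real r * cis t)
                - (\<Sum>k<K. taylor_coeff g k * (complex_of_real r * cis t)^k)) \<le> M * q^K"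
    using taylor_remainder_circle_bound[OF hol r] by blast
  have holc: "g holomorphic_on cball 0 r" using hol by (rule holomorphic_on_subset) (use r in auto)
  have bound: "h2_mean g r \<le> X + (M * q^K)^2" for K
  proof -
    define E where "E t = cmod (g (complex_of_real r * cis t)
                            - (\<Sum>k<K. taylor_coeff g k * (complex_of_real r * cis t)^k))^2" for t
    have "E integrable_on {0..2*pi}" unfolding E_def
      using r holomorphic_on_imp_continuous_on[OF holc]
      by (intro integrable_continuous_interval continuous_intros continuous_on_circle_comp) auto
    then have "integral {0..2*pi} E \<le> integral {0..2*pi} (\<lambda>t. (M * q^K)^2)"
      by (rule integral_le) (auto simp: E_def intro!: power_mono rem)
    then have "integral {0..2*pi} E / (2*pi) \<le> (M * q^K)^2"
      by (simp add: divide_le_eq mult.commute)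
    moreover have "h2_mean g r = (\<Sum>k<K. cmod (taylor_coeff g k)^2 * r^(2*k)) + integral {0..2*pi} E / (2*pi)"
      unfolding h2_mean_cis integral_circle_norm_sq_split[OF holc r(1), of K] E_def
      by (simp add: field_simps)
    ultimately show ?thesis using X[of K] by linarith
  qed
  have "(\<lambda>K. X + (M * q^K)^2) \<longlonglongrightarrow> X + (M * 0)^2"
    using q by (intro tendsto_intros LIMSEQ_power_zero) auto
  then show ?thesis
    by (intro tendsto_lowerbound[of _ _ sequentially]) (auto intro: always_eventually bound)
qed

subsection \<open>Bounds for the operator\<close>

lemma taylor_coeff_higher_deriv:
  "taylor_coeff ((deriv ^^ n) f) k = taylor_coeff f (k + n) * (fact n * of_nat ((k + n) choose n))"
proof -
  have "(deriv ^^ k) ((deriv ^^ n) f) = (deriv ^^ (k + n)) f" by (simp add: funpow_add)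
  moreover have "fact n * fact k * ((k+n) choose n) = (fact (k+n) :: nat)"
    using binomial_fact_lemma[of n "k+n"] by simp
  then have "fact (k + n) = (fact k * (fact n * of_nat ((k + n) choose n)) :: complex)"
    by (metis (mono_tags, lifting) mult.assoc mult.commute of_nat_fact of_nat_mult)
  ultimately show ?thesis unfolding taylor_coeff_def by (simp add: field_simps)
qed

lemma h2_mean_higher_deriv_le:
  fixes n :: nat
  assumes H: "in_H2 f" and b: "0 < b" "b < 1"
  defines "N \<equiv> nat \<lfloor>real n / (1 - b)\<rfloor>"
  shows "h2_mean ((deriv ^^ n) f) b \<le> (fact n * (real (N choose n) * b^(N - n)))^2 * h2_norm f ^ 2"
proof -
  define W where "W = fact n * (real (N choose n) * b^(N - n))"
  define a where "a k = cmod (taylor_coeff f k)" for k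
  have hol: "f holomorphic_on ball 0 1" using H by (auto simp: in_H2_def)
  have holg: "(deriv ^^ n) f holomorphic_on ball 0 1"
    by (rule holomorphic_higher_deriv[OF hol]) auto
  show ?thesis unfolding W_def[symmetric]
  proof (rule h2_mean_le_of_taylor_partial_sums_le[OF holg b])
    fix K
    have term_le: "cmod (taylor_coeff ((deriv ^^ n) f) k)^2 * b^(2*k) \<le> W^2 * a (k + n)^2" for k
    proof -
      have "real ((k + n) choose n) * b^k \<le> real (N choose n) * b^(N - n)"
        using binomial_weight_le_floor[OF b, of n "k + n"] unfolding N_def by simp
      then have "(fact n * real ((k + n) choose n) * b^k)^2 \<le> W^2"
        using b unfolding W_def by (intro power_mono) (auto simp: mult.assoc)
      moreover have "cmod (taylor_coeff ((deriv ^^ n) f) k)^2 * b^(2*k)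
          = a (k + n)^2 * (fact n * real ((k + n) choose n) * b^k)^2"
        by (simp add: taylor_coeff_higher_deriv a_def norm_mult power_mult_distrib power_mult mult_ac)
      ultimately show ?thesis by (metis mult.commute mult_left_mono zero_le_power2)
    qed
    have "(\<Sum>k<K. cmod (taylor_coeff ((deriv ^^ n) f) k)^2 * b^(2*k)) \<le> W^2 * (\<Sum>k<K. a (k + n)^2)"
      unfolding sum_distrib_left by (rule sum_mono) (rule term_le)
    also have "(\<Sum>k<K. a (k + n)^2) = (\<Sum>k\<in>(\<lambda>k. k + n) ` {..<K}. a k^2)"
      by (simp add: sum.reindex)
    also have "\<dots> \<le> (\<Sum>k<K + n. a k^2)"
      by (rule sum_mono2) auto
    also have "\<dots> \<le> h2_norm f ^ 2"
      unfolding a_def by (rule taylor_partial_sum_le_h2_norm_sq[OF H])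
    finally show "(\<Sum>k<K. cmod (taylor_coeff ((deriv ^^ n) f) k)^2 * b^(2*k)) \<le> W^2 * h2_norm f ^ 2"
      by (simp add: mult_left_mono)
  qed
qed

lemma h2_mean_weighted_comp_le:
  fixes \<phi> \<psi> g :: "complex \<Rightarrow> complex"
  assumes gh: "g holomorphic_on cball 0 b"
    and phi_hol: "\<phi> holomorphic_on ball 0 1" and phi_lt: "\<And>z. z \<in> ball 0 1 \<Longrightarrow> cmod (\<phi> z) < b"
    and psi_hol: "\<psi> holomorphic_on ball 0 1" and psi_le: "\<And>z. z \<in> ball 0 1 \<Longrightarrow> cmod (\<psi> z) \<le> M"
    and r: "0 < r" "r < 1"
  shows "h2_mean (\<lambda>z. \<psi> z * g (\<phi> z)) r \<le> M^2 * ((b + cmod (\<phi> 0)) / (b - cmod (\<phi> 0))) * h2_mean g b"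
proof -
  define z where "z t = complex_of_real r * cis t" for t
  have inb: "z t \<in> ball 0 1" for t using r by (simp add: z_def)
  have c1: "continuous_on {0..2*pi} (\<lambda>t. \<psi> (z t))"
    using inb unfolding z_def
    by (intro continuous_on_compose2[OF holomorphic_on_imp_continuous_on[OF psi_hol]] continuous_intros) auto
  have c2: "continuous_on {0..2*pi} (\<lambda>t. g (\<phi> (z t)))"
    using inb phi_lt unfolding z_def
    by (intro continuous_on_compose2[OF holomorphic_on_imp_continuous_on[OF gh]]
          continuous_on_compose2[OF holomorphic_on_imp_continuous_on[OF phi_hol]] continuous_intros)
       (auto simp: less_imp_le)
  have "integral {0..2*pi} (\<lambda>t. cmod (\<psi> (z t) * g (\<phi> (z t)))^2)
      \<le> integral {0..2*pi} (\<lambda>t. M^2 * cmod (g (\<phi> (z t)))^2)"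
  proof (rule integral_le)
    show "(\<lambda>t. cmod (\<psi> (z t) * g (\<phi> (z t)))^2) integrable_on {0..2*pi}"
      "(\<lambda>t. M^2 * cmod (g (\<phi> (z t)))^2) integrable_on {0..2*pi}"
      by (intro integrable_continuous_interval continuous_intros c1 c2)+
    show "cmod (\<psi> (z t) * g (\<phi> (z t)))^2 \<le> M^2 * cmod (g (\<phi> (z t)))^2" for t
      using psi_le[OF inb[of t]] norm_ge_zero[of "\<psi> (z t)"]
      by (simp add: norm_mult power_mult_distrib mult_right_mono power_mono)
  qed
  also have "\<dots> = M^2 * integral {0..2*pi} (\<lambda>t. cmod (g (\<phi> (z t)))^2)"
    by simp
  also have "\<dots> \<le> M^2 * ((b + cmod (\<phi> 0)) / (b - cmod (\<phi> 0))
                   * integral {0..2*pi} (\<lambda>t. cmod (g (complex_of_real b * cis t))^2))"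
    using integral_circle_comp_le[OF gh phi_hol phi_lt r] unfolding z_def by (intro mult_left_mono) auto
  finally have "1/(2*pi) * integral {0..2*pi} (\<lambda>t. cmod (\<psi> (z t) * g (\<phi> (z t)))^2)
      \<le> 1/(2*pi) * (M^2 * ((b + cmod (\<phi> 0)) / (b - cmod (\<phi> 0))
                   * integral {0..2*pi} (\<lambda>t. cmod (g (complex_of_real b * cis t))^2)))"
    by (rule mult_left_mono) simp
  then show ?thesis unfolding h2_mean_cis z_def by (simp only: mult_ac)
qed

lemma in_H2_h2_norm_le:
  assumes "f holomorphic_on ball 0 1" "0 \<le> B" "\<And>r. 0 < r \<Longrightarrow> r < 1 \<Longrightarrow> h2_mean f r \<le> B^2"
  shows "in_H2 f \<and> h2_norm f \<le> B"
proof
  show "in_H2 f" unfolding in_H2_def using assms by (auto intro!: bdd_aboveI)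
  have "(SUP r\<in>{0<..<1}. h2_mean f r) \<le> B^2"
    by (rule cSUP_least) (use assms in auto)
  then show "h2_norm f \<le> B"
    unfolding h2_norm_def using assms(2) real_sqrt_le_mono by fastforce
qed

lemma h2_opnorm_le:
  assumes "\<And>f. in_H2 f \<Longrightarrow> h2_norm f \<le> 1 \<Longrightarrow> in_H2 (T f) \<and> h2_norm (T f) \<le> B"
  shows "h2_opnorm T \<le> ereal B"
  unfolding h2_opnorm_def using assms by (intro SUP_least) auto

lemma h2_opnorm_wcd_op_le:
  fixes n :: nat and \<phi> \<psi> :: "complex \<Rightarrow> complex" and b M :: real
  assumes phi_hol: "\<phi> holomorphic_on ball 0 1"
    and phi_lt: "\<And>z. z \<in> ball 0 1 \<Longrightarrow> cmod (\<phi> z) < b" and b1: "b < 1"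
    and psi_hol: "\<psi> holomorphic_on ball 0 1"
    and psi_le: "\<And>z. z \<in> ball 0 1 \<Longrightarrow> cmod (\<psi> z) \<le> M"
  defines "N \<equiv> nat \<lfloor>real n / (1 - b)\<rfloor>"
  shows "h2_opnorm (wcd_op \<psi> \<phi> n) \<le>
     ereal (fact n * M * sqrt ((b + cmod (\<phi> 0)) / (b - cmod (\<phi> 0))) * (real (N choose n) * b^(N - n)))"
proof (rule h2_opnorm_le)
  fix f assume H: "in_H2 f" and f1: "h2_norm f \<le> 1"
  define C where "C = (b + cmod (\<phi> 0)) / (b - cmod (\<phi> 0))"
  define W where "W = fact n * (real (N choose n) * b^(N - n))"
  define g where "g = (deriv ^^ n) f"
  have ab: "cmod (\<phi> 0) < b" using phi_lt[of 0] by simp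
  then have b0: "0 < b" using norm_ge_zero[of "\<phi> 0"] by linarith
  have C0: "0 \<le> C" unfolding C_def using ab b0 by (intro divide_nonneg_nonneg) auto
  have M0: "0 \<le> M" using order_trans[OF norm_ge_zero psi_le[of 0]] by simp
  have W0: "0 \<le> W" using b0 by (simp add: W_def)
  have holg: "g holomorphic_on ball 0 1" unfolding g_def using H
    by (intro holomorphic_higher_deriv) (auto simp: in_H2_def)
  have "\<phi> ` ball 0 1 \<subseteq> ball 0 1" using phi_lt b1 by fastforce
  then have "(\<lambda>z. \<psi> z * g (\<phi> z)) holomorphic_on ball 0 1"
    using holomorphic_on_compose_gen[OF phi_hol holg] psi_hol by (auto intro!: holomorphic_intros simp: o_def)
  moreover have "h2_mean (\<lambda>z. \<psi> z * g (\<phi> z)) r \<le> (M * sqrt C * W)^2" if r: "0 < r" "r < 1" for r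
  proof -
    have "h2_mean (\<lambda>z. \<psi> z * g (\<phi> z)) r \<le> M^2 * C * h2_mean g b"
      unfolding C_def using holg b1
      by (intro h2_mean_weighted_comp_le phi_hol phi_lt psi_hol psi_le r holomorphic_on_subset[OF holg]) auto
    also have "\<dots> \<le> M^2 * C * (W^2 * h2_norm f ^ 2)"
      unfolding g_def W_def N_def using C0 by (intro mult_left_mono h2_mean_higher_deriv_le H b0 b1) auto
    also have "\<dots> \<le> M^2 * C * W^2"
      using f1 h2_norm_nonneg[OF H] C0 by (intro mult_left_mono mult_left_le) (auto simp: power_le_one)
    also have "\<dots> = (M * sqrt C * W)^2" using C0 by (simp add: power_mult_distrib)
    finally show ?thesis .
  qed
  ultimately have "in_H2 (\<lambda>z. \<psi> z * g (\<phi> z)) \<and> h2_norm (\<lambda>z. \<psi> z * g (\<phi> z)) \<le> M * sqrt C * W"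
    using M0 C0 W0 by (intro in_H2_h2_norm_le) auto
  then show "in_H2 (wcd_op \<psi> \<phi> n f) \<and> h2_norm (wcd_op \<psi> \<phi> n f)
      \<le> fact n * M * sqrt ((b + cmod (\<phi> 0)) / (b - cmod (\<phi> 0))) * (real (N choose n) * b^(N - n))"
    by (simp add: wcd_op_def g_def C_def W_def mult_ac)
qed

lemma h2_opnorm_cd_op_le_fact:
  fixes n :: nat and \<phi> :: "complex \<Rightarrow> complex"
  assumes n: "n \<ge> 1" and phi_hol: "\<phi> holomorphic_on ball 0 1"
    and phi_lt: "\<And>z. z \<in> ball 0 1 \<Longrightarrow> cmod (\<phi> z) < 1 / (real n + 1)" and phi0: "\<phi> 0 = 0"
  shows "h2_opnorm (cd_op \<phi> n) \<le> ereal (fact n)"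
proof -
  define b where "b = 1 / (real n + 1)"
  have b: "0 < b" "b < 1" using n by (auto simp: b_def)
  have N: "nat \<lfloor>real n / (1 - b)\<rfloor> = Suc n"
  proof -
    have "real n / (1 - b) = real n + 1" using n by (simp add: b_def field_simps)
    then show ?thesis by (simp add: nat_add_distrib)
  qed
  have "cd_op \<phi> n = wcd_op (\<lambda>_. 1) \<phi> n" unfolding cd_op_def wcd_op_def by simp
  moreover have "h2_opnorm (wcd_op (\<lambda>_. 1) \<phi> n) \<le>
     ereal (fact n * 1 * sqrt ((b + cmod (\<phi> 0)) / (b - cmod (\<phi> 0)))
       * (real (Suc n choose n) * b^(Suc n - n)))"
    using h2_opnorm_wcd_op_le[OF phi_hol _ b(2), of "\<lambda>_. 1" 1 n] phi_lt N by (simp add: b_def)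
  ultimately show ?thesis using b(1) by (simp add: phi0 b_def add.commute)
qed

subsection \<open>Sup norm and sharpness\<close>

lemma norm_le_hinf_norm:
  assumes "bounded (f ` ball 0 1)" "z \<in> ball 0 1"
  shows "cmod (f z) \<le> hinf_norm f"
proof -
  obtain B where "\<And>x. x \<in> f ` ball 0 1 \<Longrightarrow> norm x \<le> B"
    using assms(1) unfolding bounded_iff by blast
  then have "bdd_above ((\<lambda>z. cmod (f z)) ` ball 0 1)"
    by (auto intro!: bdd_aboveI)
  then show ?thesis unfolding hinf_norm_def by (rule cSUP_upper[OF assms(2)])
qed

lemma norm_less_hinf_norm:
  fixes \<phi> :: "complex \<Rightarrow> complex"
  assumes hol: "\<phi> holomorphic_on ball 0 1" and bdd: "bounded (\<phi> ` ball 0 1)"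
    and nonconst: "\<not> (\<exists>c. \<forall>z\<in>ball 0 1. \<phi> z = c)" and z: "z \<in> ball 0 1"
  shows "cmod (\<phi> z) < hinf_norm \<phi>"
proof (rule ccontr)
  assume "\<not> cmod (\<phi> z) < hinf_norm \<phi>"
  then have "cmod (\<phi> w) \<le> cmod (\<phi> z)" if "w \<in> ball 0 1" for w
    using norm_le_hinf_norm[OF bdd that] by linarith
  then have "\<phi> constant_on ball 0 1"
    by (intro maximum_modulus_principle[OF hol open_ball connected_ball open_ball subset_refl z]) auto
  then show False using nonconst unfolding constant_on_def by blast
qed

lemma h2_mean_power:
  assumes "r \<ge> 0" shows "h2_mean (\<lambda>z. z ^ n) r = r ^ (2 * n)"
proof -
  have "cmod ((complex_of_real r * cis t) ^ n) ^ 2 = r ^ (2 * n)" for t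
    using assms by (simp add: norm_power norm_mult power_mult mult.commute flip: power_mult_distrib)
  then show ?thesis unfolding h2_mean_cis by simp
qed

lemma in_H2_power: "in_H2 (\<lambda>z. z ^ n)" and h2_norm_power: "h2_norm (\<lambda>z. z ^ n) = 1"
proof -
  have le1: "h2_mean (\<lambda>z. z ^ n) r \<le> 1" if "r \<in> {0<..<1}" for r
    using that by (simp add: h2_mean_power power_le_one)
  then have bdd: "bdd_above (h2_mean (\<lambda>z. z ^ n) ` {0<..<1})"
    by (auto intro!: bdd_aboveI[where M=1])
  then show "in_H2 (\<lambda>z. z ^ n)" unfolding in_H2_def by (auto intro!: holomorphic_intros)
  have "((\<lambda>r::real. r ^ (2 * n)) \<longlongrightarrow> 1 ^ (2 * n)) (at_left 1)"
    by (intro tendsto_intros)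
  moreover have "eventually (\<lambda>r. r ^ (2 * n) \<le> (SUP r\<in>{0<..<1}. h2_mean (\<lambda>z. z ^ n) r)) (at_left (1::real))"
    using eventually_at_left_real[of 0 1, simplified]
    by eventually_elim (use cSUP_upper[OF _ bdd] h2_mean_power in fastforce)
  ultimately have "1 \<le> (SUP r\<in>{0<..<1}. h2_mean (\<lambda>z. z ^ n) r)"
    using tendsto_upperbound by fastforce
  moreover have "(SUP r\<in>{0<..<1}. h2_mean (\<lambda>z. z ^ n) r) \<le> 1"
    by (rule cSUP_least) (use le1 in auto)
  ultimately show "h2_norm (\<lambda>z. z ^ n) = 1" unfolding h2_norm_def by simp
qed

lemma h2_opnorm_cd_op_ge_fact: "ereal (fact n) \<le> h2_opnorm (cd_op \<phi> n)"
proof -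
  have "(deriv ^^ n) (\<lambda>z::complex. z ^ n) w = fact n" for w
    using higher_deriv_power[of n 0 n w] by (simp add: pochhammer_fact)
  then have "cd_op \<phi> n (\<lambda>z. z ^ n) = (\<lambda>_. fact n)"
    by (simp add: cd_op_def)
  moreover have "in_H2 (\<lambda>_. c)" and "h2_norm (\<lambda>_. c) = cmod c" for c :: complex
    by (simp_all add: in_H2_def h2_norm_def h2_mean_def image_constant_conv)
  ultimately have "ereal (fact n) = (if in_H2 (cd_op \<phi> n (\<lambda>z. z ^ n))
      then ereal (h2_norm (cd_op \<phi> n (\<lambda>z. z ^ n))) else \<infinity>)"
    by simp
  also have "\<dots> \<le> h2_opnorm (cd_op \<phi> n)"
    unfolding h2_opnorm_def by (rule SUP_upper) (simp add: in_H2_power h2_norm_power)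
  finally show ?thesis .
qed

theorem proposition3p4:
  fixes n :: nat and \<phi> \<psi> :: "complex \<Rightarrow> complex"
  assumes n_pos: "n \<ge> 1"
    and phi_hol: "\<phi> holomorphic_on ball 0 1"
    and phi_self: "\<phi> ` ball 0 1 \<subseteq> ball 0 1"
    and phi_nonconst: "\<not> (\<exists>c. \<forall>z\<in>ball 0 1. \<phi> z = c)"
    and phi_norm: "hinf_norm \<phi> < 1"
    and psi_Hinf: "in_Hinf \<psi>"
  shows "(\<forall>b::real. hinf_norm \<phi> \<le> b \<and> b < 1 \<longrightarrow>
           h2_opnorm (wcd_op \<psi> \<phi> n) \<le>
             ereal (fact n * hinf_norm \<psi> * sqrt ((b + cmod (\<phi> 0)) / (b - cmod (\<phi> 0)))
                    * real (nat \<lfloor>real n / (1 - b)\<rfloor> choose n)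
                    * b ^ (nat \<lfloor>real n / (1 - b)\<rfloor> - n)))
       \<and> (hinf_norm \<phi> \<le> 1 / (real n + 1) \<and> \<phi> 0 = 0 \<longrightarrow>
           h2_opnorm (cd_op \<phi> n) = ereal (fact n))"
proof -
  have phi_lt: "cmod (\<phi> z) < hinf_norm \<phi>" if "z \<in> ball 0 1" for z
    using phi_self bounded_subset[OF bounded_ball] that
    by (intro norm_less_hinf_norm[OF phi_hol _ phi_nonconst]) auto
  have psi_hol: "\<psi> holomorphic_on ball 0 1" and psi_bdd: "bounded (\<psi> ` ball 0 1)"
    using psi_Hinf by (auto simp: in_Hinf_def)
  show ?thesis
  proof (intro conjI allI impI)
    fix b :: real assume b: "hinf_norm \<phi> \<le> b \<and> b < 1"
    from h2_opnorm_wcd_op_le[OF phi_hol _ _ psi_hol norm_le_hinf_norm[OF psi_bdd], of b n] phi_lt b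
    show "h2_opnorm (wcd_op \<psi> \<phi> n) \<le>
             ereal (fact n * hinf_norm \<psi> * sqrt ((b + cmod (\<phi> 0)) / (b - cmod (\<phi> 0)))
                    * real (nat \<lfloor>real n / (1 - b)\<rfloor> choose n)
                    * b ^ (nat \<lfloor>real n / (1 - b)\<rfloor> - n))"
      by (fastforce simp: mult.assoc intro: less_le_trans)
  next
    assume "hinf_norm \<phi> \<le> 1 / (real n + 1) \<and> \<phi> 0 = 0"
    with phi_lt have "h2_opnorm (cd_op \<phi> n) \<le> ereal (fact n)"
      by (intro h2_opnorm_cd_op_le_fact[OF n_pos phi_hol]) (auto intro: less_le_trans)
    then show "h2_opnorm (cd_op \<phi> n) = ereal (fact n)"
      using h2_opnorm_cd_op_ge_fact by (rule antisym)
  qed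
qed

end
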